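(* Let $\lambda>0$ and $n\ge0$ an integer. Then for all $x\in[-1,1]$, $$\mathcal I^\lambda_+C^{\lambda+1/2}_n(x)=\frac{\sqrt\pi\,\Gamma(\lambda)}{\Gamma(\lambda+\frac12)}\,\frac{n+2\lambda}{n+\lambda+\frac12}\,C^\lambda_n(x),\qquad \mathcal I^\lambda_-C^{\lambda+1/2}_n(x)=\frac{\sqrt\pi\,\Gamma(\lambda)}{\Gamma(\lambda+\frac12)}\,\frac{n+1}{n+\lambda+\frac12}\,C^\lambda_{n+1}(x).$$
   Context: $C^\mu_n$ are Gegenbauer polynomials with generating function $(1-2xr+r^2)^{-\mu}$. For $f\in L^1[-1,1]$ and $\lambda\ge0$: $I^\lambda_+f(x)=(1+x)^{-\lambda+1/2}\int_{-1}^x(x-\tau)^{-1/2}(1+\tau)^\lambda f(\tau)\,d\tau$, $I^\lambda_-f(x)=(1-x)^{-\lambda+1/2}\int_x^1(\tau-x)^{-1/2}(1-\tau)^\lambda f(\tau)\,d\tau$, $\mathcal I^\lambda_+=I^\lambda_++I^\lambda_-$, $\mathcal I^\lambda_-=I^\lambda_+-I^\lambda_-$. *)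

theory Defs
  imports "HOL-Analysis.Analysis"
begin

definition gegenbauer :: "real \<Rightarrow> nat \<Rightarrow> real \<Rightarrow> real" where
  "gegenbauer mu n x =
     (deriv ^^ n) (\<lambda>r. (1 - 2 * x * r + r\<^sup>2) powr (- mu)) 0 / fact n"

definition I_plus :: "real \<Rightarrow> (real \<Rightarrow> real) \<Rightarrow> real \<Rightarrow> real" where
  "I_plus lam f x = (1 + x) powr (- lam + 1/2) *
     (LINT \<tau>:{-1..x}|lborel. (x - \<tau>) powr (-1/2) * (1 + \<tau>) powr lam * f \<tau>)"

definition I_minus :: "real \<Rightarrow> (real \<Rightarrow> real) \<Rightarrow> real \<Rightarrow> real" where
  "I_minus lam f x = (1 - x) powr (- lam + 1/2) *
     (LINT \<tau>:{x..1}|lborel. (\<tau> - x) powr (-1/2) * (1 - \<tau>) powr lam * f \<tau>)"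

definition calI_plus :: "real \<Rightarrow> (real \<Rightarrow> real) \<Rightarrow> real \<Rightarrow> real" where
  "calI_plus lam f x = I_plus lam f x + I_minus lam f x"

definition calI_minus :: "real \<Rightarrow> (real \<Rightarrow> real) \<Rightarrow> real \<Rightarrow> real" where
  "calI_minus lam f x = I_plus lam f x - I_minus lam f x"

end

theory Submission
  imports Defs
begin

text \<open>
  Expanded about x = 1, the Gegenbauer polynomial is a terminating hypergeometric sum,
  C^\<mu>_n(x) = (2\<mu>)_n / n! * 2F1(-n, n + 2\<mu>; \<mu> + 1/2; (1 - x)/2), and the operator I^\<lambda>_-
  maps (1 - \<tau>)^k to the Beta integral B(\<lambda> + k + 1, 1/2) (1 - x)^(k+1).  Comparing coefficients
  shows that I^\<lambda>_- C^(\<lambda>+1/2)_n is a constant multiple of (n + 2\<lambda>) C^\<lambda>_n - (n + 1) C^\<lambda>_(n+1).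
  The reflection \<tau> \<mapsto> -\<tau> turns I^\<lambda>_+ into I^\<lambda>_-, and the parity C^\<mu>_n(-x) = (-1)^n C^\<mu>_n(x)
  then produces the same combination with a plus sign; adding and subtracting gives both
  identities.  The expansion is verified through the three-term recurrence, which comes from
  the differential equation of the generating function.
\<close>

section \<open>Gegenbauer polynomials from their generating function\<close>

definition gegenbauer_quad :: "real \<Rightarrow> real \<Rightarrow> real" where
  "gegenbauer_quad x r = 1 - 2*x*r + r\<^sup>2"

definition gegenbauer_gf_deriv :: "real \<Rightarrow> real \<Rightarrow> nat \<Rightarrow> real \<Rightarrow> real" where
  "gegenbauer_gf_deriv mu x n = (deriv ^^ n) (\<lambda>r. gegenbauer_quad x r powr (- mu))"

lemma gegenbauer_eq_gf_deriv: "gegenbauer mu n x = gegenbauer_gf_deriv mu x n 0 / fact n"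
  by (simp add: gegenbauer_def gegenbauer_gf_deriv_def gegenbauer_quad_def)

lemma open_gegenbauer_quad_pos: "open {r. 0 < gegenbauer_quad x r}"
  unfolding gegenbauer_quad_def by (intro open_Collect_less continuous_intros)

lemma gegenbauer_quad_poly: "gegenbauer_quad x r = poly [:1, -2*x, 1:] r"
  by (simp add: gegenbauer_quad_def algebra_simps power2_eq_square)

lemma has_real_derivative_poly_mult_quad_powr:
  assumes "0 < gegenbauer_quad x r"
  shows "((\<lambda>r. poly P r * gegenbauer_quad x r powr a) has_real_derivative
           poly (pderiv P * [:1, -2*x, 1:] + smult a (P * [:-2*x, 2:])) r
             * gegenbauer_quad x r powr (a - 1)) (at r)"
proof -
  let ?q = "gegenbauer_quad x r"
  have "((\<lambda>r. gegenbauer_quad x r) has_real_derivative 2*r - 2*x) (at r)"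
    unfolding gegenbauer_quad_def by (auto intro!: derivative_eq_intros)
  from DERIV_mult[OF poly_DERIV[of P r] DERIV_powr[OF this assms DERIV_const[of a]]]
  have deriv: "((\<lambda>r. poly P r * gegenbauer_quad x r powr a) has_real_derivative
      poly (pderiv P) r * ?q powr a + poly P r * (?q powr a * (0 * ln ?q + (2*r - 2*x) * a / ?q))) (at r)"
    by (simp add: ac_simps)
  have alg: "poly (pderiv P) r * (q * Q) + poly P r * ((q * Q) * (0 * ln q + (2*r - 2*x) * a / q))
      = poly (pderiv P * [:1, -2*x, 1:] + smult a (P * [:-2*x, 2:])) r * Q"
    if "q = poly [:1, -2*x, 1:] r" "q \<noteq> 0" for q Q :: real
    using that(2) unfolding that(1) by (simp add: field_simps)
  have "?q powr a = ?q * ?q powr (a - 1)"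
    using assms by (simp add: powr_diff)
  then have "poly (pderiv P) r * ?q powr a + poly P r * (?q powr a * (0 * ln ?q + (2*r - 2*x) * a / ?q))
      = poly (pderiv P * [:1, -2*x, 1:] + smult a (P * [:-2*x, 2:])) r * ?q powr (a - 1)"
    using assms by (simp only: alg[OF gegenbauer_quad_poly])
  then show ?thesis
    by (rule DERIV_cong[OF deriv])
qed

lemma gegenbauer_gf_deriv_poly_form:
  "\<exists>P. \<forall>r. 0 < gegenbauer_quad x r \<longrightarrow>
         gegenbauer_gf_deriv mu x n r = poly P r * gegenbauer_quad x r powr (- mu - real n)"
proof (induction n)
  case 0
  show ?case by (intro exI[of _ 1]) (simp add: gegenbauer_gf_deriv_def)
next
  case (Suc n)
  then obtain P where P: "\<And>r. 0 < gegenbauer_quad x r \<Longrightarrow>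
      gegenbauer_gf_deriv mu x n r = poly P r * gegenbauer_quad x r powr (- mu - real n)"
    by blast
  define a where "a = - mu - real n"
  define P' where "P' = pderiv P * [:1, -2*x, 1:] + smult a (P * [:-2*x, 2:])"
  have "gegenbauer_gf_deriv mu x (Suc n) r = poly P' r * gegenbauer_quad x r powr (- mu - real (Suc n))"
    if r: "0 < gegenbauer_quad x r" for r
  proof -
    have "(gegenbauer_gf_deriv mu x n has_real_derivative poly P' r * gegenbauer_quad x r powr (a - 1)) (at r)"
      unfolding P'_def
      by (rule has_field_derivative_transform_within_open[OF
            has_real_derivative_poly_mult_quad_powr[OF r, of P a] open_gegenbauer_quad_pos])
         (use r P in \<open>auto simp: a_def\<close>)
    then show ?thesis
      by (simp add: gegenbauer_gf_deriv_def DERIV_imp_deriv a_def algebra_simps)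
  qed
  then show ?case by blast
qed

lemma gegenbauer_gf_deriv_has_derivative:
  assumes "0 < gegenbauer_quad x r"
  shows "(gegenbauer_gf_deriv mu x n has_real_derivative gegenbauer_gf_deriv mu x (Suc n) r) (at r)"
proof -
  obtain P where P: "\<And>r. 0 < gegenbauer_quad x r \<Longrightarrow>
      gegenbauer_gf_deriv mu x n r = poly P r * gegenbauer_quad x r powr (- mu - real n)"
    using gegenbauer_gf_deriv_poly_form by blast
  have "(gegenbauer_gf_deriv mu x n has_real_derivative
      poly (pderiv P * [:1, -2*x, 1:] + smult (- mu - real n) (P * [:-2*x, 2:])) r
        * gegenbauer_quad x r powr (- mu - real n - 1)) (at r)"
    by (rule has_field_derivative_transform_within_open[OF
          has_real_derivative_poly_mult_quad_powr[OF assms] open_gegenbauer_quad_pos])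
       (use assms P in auto)
  moreover have "gegenbauer_gf_deriv mu x (Suc n) r = deriv (gegenbauer_gf_deriv mu x n) r"
    by (simp add: gegenbauer_gf_deriv_def)
  ultimately show ?thesis
    by (simp add: DERIV_imp_deriv)
qed

lemma has_real_derivative_zero_if_vanishing_nearby:
  assumes "open S" "r \<in> S" "\<And>s. s \<in> S \<Longrightarrow> f s = 0" "(f has_real_derivative f') (at r)"
  shows "f' = 0"
proof -
  have "(f has_real_derivative 0) (at r)"
    by (rule has_field_derivative_transform_within_open[OF DERIV_const assms(1,2)]) (use assms(3) in auto)
  with assms(4) show ?thesis
    using DERIV_unique by blast
qed

lemma gegenbauer_gf_ode:
  assumes "0 < gegenbauer_quad x r"
  shows "gegenbauer_quad x r * gegenbauer_gf_deriv mu x 1 r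
           + mu * (2*r - 2*x) * gegenbauer_gf_deriv mu x 0 r = 0"
proof -
  have "(gegenbauer_gf_deriv mu x 0 has_real_derivative
      poly (pderiv 1 * [:1, -2*x, 1:] + smult (- mu) (1 * [:-2*x, 2:])) r
        * gegenbauer_quad x r powr (- mu - 1)) (at r)"
    using has_real_derivative_poly_mult_quad_powr[OF assms, of 1 "- mu"]
    by (simp add: gegenbauer_gf_deriv_def)
  from DERIV_unique[OF gegenbauer_gf_deriv_has_derivative[OF assms] this]
  have "gegenbauer_gf_deriv mu x 1 r = - mu * (2*r - 2*x) * gegenbauer_quad x r powr (- mu - 1)"
    by (simp add: algebra_simps)
  then have "gegenbauer_quad x r * gegenbauer_gf_deriv mu x 1 r
      = - mu * (2*r - 2*x) * (gegenbauer_quad x r * gegenbauer_quad x r powr (- mu - 1))"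
    by simp
  also have "\<dots> = - mu * (2*r - 2*x) * gegenbauer_gf_deriv mu x 0 r"
    using assms by (simp add: gegenbauer_gf_deriv_def powr_diff)
  finally show ?thesis
    by simp
qed

text \<open>Differentiating the equation q G' + \<mu> q' G = 0 for G = q powr (-\<mu>) n times relates three
  consecutive derivatives; each step only needs the vanishing of the previous relation near r.\<close>

lemma gegenbauer_gf_deriv_rec:
  assumes "0 < gegenbauer_quad x r"
  shows "gegenbauer_quad x r * gegenbauer_gf_deriv mu x (n+2) r
           + (real n + 1 + mu) * (2*r - 2*x) * gegenbauer_gf_deriv mu x (n+1) r
           + (real n + 1) * (real n + 2*mu) * gegenbauer_gf_deriv mu x n r = 0"
  using assms
proof (induction n arbitrary: r)
  case 0
  let ?f = "\<lambda>r. gegenbauer_quad x r * gegenbauer_gf_deriv mu x 1 r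
              + mu * (2*r - 2*x) * gegenbauer_gf_deriv mu x 0 r"
  have "(?f has_real_derivative (2*r - 2*x) * gegenbauer_gf_deriv mu x 1 r
          + gegenbauer_quad x r * gegenbauer_gf_deriv mu x 2 r
          + (2 * mu * gegenbauer_gf_deriv mu x 0 r
             + mu * (2*r - 2*x) * gegenbauer_gf_deriv mu x 1 r)) (at r)"
    unfolding gegenbauer_quad_def
    by (rule derivative_eq_intros gegenbauer_gf_deriv_has_derivative[unfolded gegenbauer_quad_def]
          refl | use 0 in \<open>simp add: gegenbauer_quad_def numeral_2_eq_2\<close>)+
  from has_real_derivative_zero_if_vanishing_nearby[OF open_gegenbauer_quad_pos[of x] _ _ this]
  show ?case
    using 0 gegenbauer_gf_ode by (simp add: algebra_simps numeral_2_eq_2)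
next
  case (Suc n)
  let ?f = "\<lambda>r. gegenbauer_quad x r * gegenbauer_gf_deriv mu x (n+2) r
              + (real n + 1 + mu) * (2*r - 2*x) * gegenbauer_gf_deriv mu x (n+1) r
              + (real n + 1) * (real n + 2*mu) * gegenbauer_gf_deriv mu x n r"
  have "(?f has_real_derivative (2*r - 2*x) * gegenbauer_gf_deriv mu x (n+2) r
          + gegenbauer_quad x r * gegenbauer_gf_deriv mu x (n+3) r
          + (2 * (real n + 1 + mu) * gegenbauer_gf_deriv mu x (n+1) r
             + (real n + 1 + mu) * (2*r - 2*x) * gegenbauer_gf_deriv mu x (n+2) r)
          + (real n + 1) * (real n + 2*mu) * gegenbauer_gf_deriv mu x (n+1) r) (at r)"
    unfolding gegenbauer_quad_def
    by (rule derivative_eq_intros gegenbauer_gf_deriv_has_derivative[unfolded gegenbauer_quad_def]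
          refl | use Suc.prems in \<open>simp add: gegenbauer_quad_def numeral_3_eq_3\<close>)+
  from has_real_derivative_zero_if_vanishing_nearby[OF open_gegenbauer_quad_pos[of x] _ _ this]
  have "(2*r - 2*x) * gegenbauer_gf_deriv mu x (n+2) r
          + gegenbauer_quad x r * gegenbauer_gf_deriv mu x (n+3) r
          + (2 * (real n + 1 + mu) * gegenbauer_gf_deriv mu x (n+1) r
             + (real n + 1 + mu) * (2*r - 2*x) * gegenbauer_gf_deriv mu x (n+2) r)
          + (real n + 1) * (real n + 2*mu) * gegenbauer_gf_deriv mu x (n+1) r = 0"
    using Suc by blast
  then show ?case
    by (simp add: algebra_simps numeral_3_eq_3)
qed

lemma gegenbauer_0 [simp]: "gegenbauer mu 0 x = 1"
  by (simp add: gegenbauer_eq_gf_deriv gegenbauer_gf_deriv_def gegenbauer_quad_def)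

lemma gegenbauer_1: "gegenbauer mu 1 x = 2 * mu * x"
  using gegenbauer_gf_ode[of x 0 mu]
  by (simp add: gegenbauer_eq_gf_deriv gegenbauer_gf_deriv_def gegenbauer_quad_def)

lemma gegenbauer_rec:
  "(real n + 2) * gegenbauer mu (n+2) x
     = 2 * x * (real n + 1 + mu) * gegenbauer mu (n+1) x - (real n + 2*mu) * gegenbauer mu n x"
proof -
  let ?D = "\<lambda>k. gegenbauer_gf_deriv mu x k 0"
  have rec: "?D (n+2) = 2 * x * (real n + 1 + mu) * ?D (n+1) - (real n + 1) * (real n + 2*mu) * ?D n"
    using gegenbauer_gf_deriv_rec[of x 0 mu n] by (simp add: gegenbauer_quad_def algebra_simps)
  have C: "gegenbauer mu (n+2) x = ?D (n+2) / ((real n + 2) * (real n + 1) * fact n)"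
    "gegenbauer mu (n+1) x = ?D (n+1) / ((real n + 1) * fact n)"
    "gegenbauer mu n x = ?D n / fact n"
    by (simp_all add: gegenbauer_eq_gf_deriv algebra_simps)
  have "(N + 2) * ((2 * x * (N + 1 + mu) * D1 - (N + 1) * (N + 2*mu) * D0) / ((N + 2) * (N + 1) * F))
      = 2 * x * (N + 1 + mu) * (D1 / ((N + 1) * F)) - (N + 2*mu) * (D0 / F)"
    if "F \<noteq> 0" "N \<ge> 0" for N F D0 D1 :: real
  proof -
    have "N + 1 \<noteq> 0" "N + 2 \<noteq> 0"
      using that(2) by linarith+
    with that(1) show ?thesis
      by (simp add: divide_simps)
  qed
  then show ?thesis
    unfolding C rec by simp
qed

lemma gegenbauer_unique:
  assumes "h 0 = 1" and "h 1 = 2 * mu * x"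
    and "\<And>n. (real n + 2) * h (n+2) = 2 * x * (real n + 1 + mu) * h (n+1) - (real n + 2*mu) * h n"
  shows "h n = gegenbauer mu n x"
proof -
  have "h n = gegenbauer mu n x \<and> h (n+1) = gegenbauer mu (n+1) x"
  proof (induction n)
    case 0
    then show ?case
      using assms(1,2) gegenbauer_1 by simp
  next
    case (Suc n)
    have "(real n + 2) * h (n+2) = (real n + 2) * gegenbauer mu (n+2) x"
      using assms(3)[of n] gegenbauer_rec[of n mu x] Suc by simp
    with Suc show ?case
      by simp
  qed
  then show ?thesis ..
qed

lemma gegenbauer_minus: "gegenbauer mu n (-x) = (-1)^n * gegenbauer mu n x"
proof -
  have "(-1)^n * gegenbauer mu n (-x) = gegenbauer mu n x"
  proof (rule gegenbauer_unique)
    show "(-1)^1 * gegenbauer mu 1 (-x) = 2 * mu * x"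
      using gegenbauer_1[of mu "-x"] by simp
    show "(real n + 2) * ((-1)^(n+2) * gegenbauer mu (n+2) (-x))
        = 2 * x * (real n + 1 + mu) * ((-1)^(n+1) * gegenbauer mu (n+1) (-x))
          - (real n + 2*mu) * ((-1)^n * gegenbauer mu n (-x))" for n
      using arg_cong[OF gegenbauer_rec[of n mu "-x"], of "\<lambda>t. (-1)^n * t"]
      by (simp add: algebra_simps)
  qed simp
  then have "(-1)^n * ((-1)^n * gegenbauer mu n (-x)) = (-1)^n * gegenbauer mu n x"
    by simp
  then show ?thesis
    by (simp add: mult.assoc[symmetric] flip: power_mult_distrib)
qed

section \<open>Expansion about x = 1\<close>

text \<open>The coefficient of (1 - x)^k in C^\<mu>_n(x).  The Pochhammer symbol (-n)_k stands in for
  (-1)^k n!/(n - k)!, so the coefficient vanishes for k > n without truncated subtraction.\<close>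

definition gegenbauer_coeff :: "real \<Rightarrow> nat \<Rightarrow> nat \<Rightarrow> real" where
  "gegenbauer_coeff mu n k =
     pochhammer (- real n) k * pochhammer (2*mu) (n + k)
       / (fact n * fact k * pochhammer (mu + 1/2) k * 2^k)"

lemma gegenbauer_coeff_eq_0: "n < k \<Longrightarrow> gegenbauer_coeff mu n k = 0"
  by (simp add: gegenbauer_coeff_def pochhammer_of_nat_eq_0_lemma)

lemma gegenbauer_coeff_0: "gegenbauer_coeff mu n 0 = pochhammer (2*mu) n / fact n"
  by (simp add: gegenbauer_coeff_def)

lemma gegenbauer_coeff_rec_0:
  "(real n + 2) * gegenbauer_coeff mu (n+2) 0
     = 2 * (real n + 1 + mu) * gegenbauer_coeff mu (n+1) 0 - (real n + 2*mu) * gegenbauer_coeff mu n 0"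
proof -
  have "pochhammer (2*mu) (n+2) = pochhammer (2*mu) n * (2*mu + real n) * (2*mu + real n + 1)"
    "pochhammer (2*mu) (n+1) = pochhammer (2*mu) n * (2*mu + real n)"
    "fact (n+2) = (real n + 2) * (real n + 1) * fact n"
    "fact (n+1) = (real n + 1) * fact n"
    by (simp_all add: pochhammer_rec' algebra_simps)
  then show ?thesis
    by (simp add: gegenbauer_coeff_0 divide_simps) (simp add: algebra_simps)
qed

lemma gegenbauer_coeff_rec_Suc:
  assumes "mu > -1/2"
  shows "(real n + 2) * gegenbauer_coeff mu (n+2) (Suc j)
     = 2 * (real n + 1 + mu) * (gegenbauer_coeff mu (n+1) (Suc j) - gegenbauer_coeff mu (n+1) j)
       - (real n + 2*mu) * gegenbauer_coeff mu n (Suc j)"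
proof -
  \<comment> \<open>Expressed through V, Q and H the claim is an identity of rational functions; V is based at
    -(n+1) because (-n)_(j+1) is then obtained by dividing by n + 1 \<noteq> 0, never by a factor that may vanish.\<close>
  define V where "V = pochhammer (- real (n+1)) j"
  define Q where "Q = pochhammer (2*mu) (n + j + 1)"
  define H where "H = pochhammer (mu + 1/2) j"
  have nz: "H \<noteq> 0" "mu + 1/2 + real j \<noteq> 0"
    using assms by (auto simp: H_def pochhammer_eq_0_iff)
  have "pochhammer (- real (n+1)) (Suc (Suc j)) = (- real n - 1) * pochhammer (- real n) (Suc j)"
    by (simp add: pochhammer_rec algebra_simps)
  moreover have "pochhammer (- real (n+1)) (Suc (Suc j)) = V * (real j - real n - 1) * (real j - real n)"
    by (simp add: V_def pochhammer_rec' algebra_simps)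
  ultimately have V0: "pochhammer (- real n) (Suc j) = - V * (real j - real n - 1) * (real j - real n) / (real n + 1)"
    by (simp add: field_simps)
  have V1: "pochhammer (- real (n+2)) (Suc j) = (- real n - 2) * V"
    by (simp add: V_def pochhammer_rec algebra_simps)
  have V2: "pochhammer (- real (n+1)) (Suc j) = V * (real j - real n - 1)"
    "pochhammer (- real (n+1)) j = V"
    by (simp_all add: V_def pochhammer_rec' algebra_simps)
  have Q: "pochhammer (2*mu) (n + 2 + Suc j) = Q * (2*mu + real n + real j + 1) * (2*mu + real n + real j + 2)"
    "pochhammer (2*mu) (n + 1 + Suc j) = Q * (2*mu + real n + real j + 1)"
    "pochhammer (2*mu) (n + 1 + j) = Q"
    "pochhammer (2*mu) (n + Suc j) = Q"
    by (simp_all add: Q_def pochhammer_rec' algebra_simps)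
  have H: "pochhammer (mu + 1/2) (Suc j) = H * (mu + 1/2 + real j)"
    by (simp add: H_def pochhammer_rec' algebra_simps)
  have F: "fact (n+2) = (real n + 2) * (real n + 1) * fact n"
    "fact (n+1) = (real n + 1) * fact n"
    "fact (Suc j) = (real j + 1) * fact j"
    by (simp_all add: algebra_simps)
  show ?thesis
    using nz unfolding gegenbauer_coeff_def V0 V1 V2 Q H F H_def[symmetric]
    by (simp add: divide_simps) (simp add: algebra_simps)
qed

lemma sum_gegenbauer_coeff_atMost:
  "n \<le> N \<Longrightarrow> (\<Sum>k\<le>N. gegenbauer_coeff mu n k * y^k) = (\<Sum>k\<le>n. gegenbauer_coeff mu n k * y^k)"
  by (rule sum.mono_neutral_right) (auto simp: gegenbauer_coeff_eq_0)

lemma sum_gegenbauer_coeff_rec: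
  assumes "mu > -1/2"
  shows "(real m + 2) * (\<Sum>k\<le>m+2. gegenbauer_coeff mu (m+2) k * y^k)
           = 2 * (1 - y) * (real m + 1 + mu) * (\<Sum>k\<le>m+1. gegenbauer_coeff mu (m+1) k * y^k)
             - (real m + 2*mu) * (\<Sum>k\<le>m. gegenbauer_coeff mu m k * y^k)"
proof -
  let ?S = "\<lambda>n. \<Sum>k\<le>m+2. gegenbauer_coeff mu n k * y^k"
  let ?s = "\<lambda>k. case k of 0 \<Rightarrow> 0 | Suc j \<Rightarrow> gegenbauer_coeff mu (m+1) j"
  have "y * (\<Sum>k\<le>m+1. gegenbauer_coeff mu (m+1) k * y^k) = (\<Sum>j\<le>m+1. gegenbauer_coeff mu (m+1) j * y^Suc j)"
    unfolding sum_distrib_left by (intro sum.cong refl) (simp add: ac_simps)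
  also have "\<dots> = (\<Sum>k\<le>Suc (m+1). ?s k * y^k)"
    by (subst sum.atMost_Suc_shift) simp
  finally have shift: "y * (\<Sum>k\<le>m+1. gegenbauer_coeff mu (m+1) k * y^k) = (\<Sum>k\<le>m+2. ?s k * y^k)"
    by simp
  have rec: "(real m + 2) * gegenbauer_coeff mu (m+2) k
      = 2 * (real m + 1 + mu) * (gegenbauer_coeff mu (m+1) k - ?s k) - (real m + 2*mu) * gegenbauer_coeff mu m k"
    for k
    using gegenbauer_coeff_rec_0 gegenbauer_coeff_rec_Suc[OF assms] by (cases k) simp_all
  have "(real m + 2) * ?S (m+2) = (\<Sum>k\<le>m+2. ((real m + 2) * gegenbauer_coeff mu (m+2) k) * y^k)"
    unfolding sum_distrib_left by (intro sum.cong refl) (simp add: ac_simps)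
  also have "\<dots> = (\<Sum>k\<le>m+2. 2 * (real m + 1 + mu) * (gegenbauer_coeff mu (m+1) k * y^k)
      - 2 * (real m + 1 + mu) * (?s k * y^k) - (real m + 2*mu) * (gegenbauer_coeff mu m k * y^k))"
    unfolding rec by (simp add: algebra_simps)
  also have "\<dots> = 2 * (real m + 1 + mu) * ?S (m+1)
      - 2 * (real m + 1 + mu) * (y * (\<Sum>k\<le>m+1. gegenbauer_coeff mu (m+1) k * y^k)) - (real m + 2*mu) * ?S m"
    unfolding shift unfolding sum_subtractf sum_distrib_left ..
  finally have "(real m + 2) * ?S (m+2) = 2 * (real m + 1 + mu) * ?S (m+1)
      - 2 * (real m + 1 + mu) * (y * (\<Sum>k\<le>m+1. gegenbauer_coeff mu (m+1) k * y^k)) - (real m + 2*mu) * ?S m" .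
  moreover have "?S (m+1) = (\<Sum>k\<le>m+1. gegenbauer_coeff mu (m+1) k * y^k)"
    "?S m = (\<Sum>k\<le>m. gegenbauer_coeff mu m k * y^k)"
    by (rule sum_gegenbauer_coeff_atMost; simp)+
  ultimately show ?thesis
    by (simp add: algebra_simps del: sum.atMost_Suc)
qed

lemma gegenbauer_eq_sum_coeff:
  assumes "mu > -1/2" and "n \<le> N"
  shows "gegenbauer mu n x = (\<Sum>k\<le>N. gegenbauer_coeff mu n k * (1 - x)^k)"
proof -
  define h where "h m = (\<Sum>k\<le>m. gegenbauer_coeff mu m k * (1 - x)^k)" for m
  have "h m = gegenbauer mu m x" for m
  proof (rule gegenbauer_unique)
    show "h 0 = 1"
      by (simp add: h_def gegenbauer_coeff_0)
    have "h 1 = 2 * mu - 2 * mu * (1 - x)"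
      using assms(1) unfolding h_def
      by (simp add: gegenbauer_coeff_def numeral_2_eq_2 pochhammer_rec divide_simps) (simp add: algebra_simps)
    then show "h 1 = 2 * mu * x"
      by (simp add: algebra_simps)
    show "(real m + 2) * h (m+2) = 2 * x * (real m + 1 + mu) * h (m+1) - (real m + 2*mu) * h m" for m
      using sum_gegenbauer_coeff_rec[OF assms(1), of m "1 - x"] by (simp add: h_def algebra_simps)
  qed
  then show ?thesis
    using sum_gegenbauer_coeff_atMost[OF assms(2)] by (simp add: h_def)
qed

section \<open>The integral operators on polynomials in 1 - \<tau>\<close>

lemma has_integral_Beta_scaled:
  fixes a b l :: real
  assumes "a > 0" "b > 0" "l > 0"
  shows "((\<lambda>t. t powr (a - 1) * (l - t) powr (b - 1)) has_integral l powr (a + b - 1) * Beta a b) {0..l}"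
proof -
  have "((\<lambda>t. t powr (a - 1) * (1 - t) powr (b - 1)) has_integral Beta a b) (cbox 0 1)"
    using has_integral_Beta_real[OF assms(1,2)] by simp
  note Beta = has_integral_affinity[OF this, of "1/l" 0]
  have "(\<lambda>t. t * l) ` {0..1} = {0..l}"
    using image_affinity_atLeastAtMost[of l 0 0 1] assms(3) by (simp add: mult.commute)
  with Beta assms(3)
  have "((\<lambda>t. (t/l) powr (a - 1) * (1 - t/l) powr (b - 1)) has_integral l * Beta a b) {0..l}"
    by (simp add: divide_inverse mult.commute)
  from has_integral_mult_right[OF this, of "l powr (a + b - 2)"]
  have "((\<lambda>t. l powr (a + b - 2) * ((t/l) powr (a - 1) * (1 - t/l) powr (b - 1)))
          has_integral l powr (a + b - 2) * (l * Beta a b)) {0..l}" .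
  moreover have "l powr (a + b - 2) * (l * Beta a b) = l powr (a + b - 1) * Beta a b"
    using assms(3) by (simp add: powr_diff powr_add field_simps power2_eq_square)
  moreover have "l powr (a + b - 2) * ((t/l) powr (a - 1) * (1 - t/l) powr (b - 1))
      = t powr (a - 1) * (l - t) powr (b - 1)" for t
  proof -
    have "1 - t/l = (l - t) / l"
      using assms(3) by (simp add: field_simps)
    then have "l powr (a + b - 2) * ((t/l) powr (a - 1) * (1 - t/l) powr (b - 1))
        = l powr (a + b - 2) * (t powr (a - 1) / l powr (a - 1) * ((l - t) powr (b - 1) / l powr (b - 1)))"
      by (simp add: powr_divide)
    also have "\<dots> = t powr (a - 1) * (l - t) powr (b - 1) * (l powr (a + b - 2) / (l powr (a - 1) * l powr (b - 1)))"
      by (simp add: field_simps)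
    also have "l powr (a + b - 2) / (l powr (a - 1) * l powr (b - 1)) = 1"
      using assms(3) by (simp add: powr_add[symmetric])
    finally show ?thesis
      by simp
  qed
  ultimately show ?thesis
    by simp
qed

lemma has_integral_I_minus_kernel_power:
  fixes lam x :: real
  assumes "lam > 0" "x < 1"
  shows "((\<lambda>\<tau>. (\<tau> - x) powr (-1/2) * (1 - \<tau>) powr lam * (1 - \<tau>)^k) has_integral
           (1 - x) powr (lam + real k + 1/2) * Beta (lam + real k + 1) (1/2)) {x..1}"
proof -
  have "((\<lambda>t. t powr (lam + real k) * (1 - x - t) powr (-1/2)) has_integral
      (1 - x) powr (lam + real k + 1/2) * Beta (lam + real k + 1) (1/2)) (cbox 0 (1 - x))"
    using has_integral_Beta_scaled[of "lam + real k + 1" "1/2" "1 - x"] assms by (simp add: add_ac)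
  from has_integral_affinity[OF this, of "-1" 1]
  have "((\<lambda>\<tau>. (1 - \<tau>) powr (lam + real k) * (\<tau> - x) powr (-1/2)) has_integral
      (1 - x) powr (lam + real k + 1/2) * Beta (lam + real k + 1) (1/2)) {x..1}"
    using assms(2) by (simp add: algebra_simps image_affinity_atLeastAtMost)
  then show ?thesis
  proof (rule has_integral_eq[rotated])
    fix \<tau> :: real
    assume "\<tau> \<in> {x..1}"
    then have "(1 - \<tau>) powr lam * (1 - \<tau>)^k = (1 - \<tau>) powr (lam + real k)"
      using assms(1) by (cases "\<tau> = 1") (simp_all add: powr_add powr_realpow)
    then show "(1 - \<tau>) powr (lam + real k) * (\<tau> - x) powr (-1/2)
        = (\<tau> - x) powr (-1/2) * (1 - \<tau>) powr lam * (1 - \<tau>)^k"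
      by (simp add: ac_simps)
  qed
qed

lemma set_integrable_lborel_if_nonneg:
  fixes f :: "real \<Rightarrow> real"
  assumes "f integrable_on {a..b}" "\<And>t. t \<in> {a..b} \<Longrightarrow> 0 \<le> f t" "f \<in> borel_measurable borel"
  shows "set_integrable lborel {a..b} f"
proof -
  have "integrable lebesgue (\<lambda>t. indicator {a..b} t *\<^sub>R f t)"
    using nonnegative_absolutely_integrable_1[OF assms(1,2)]
    by (simp add: absolutely_integrable_on_def set_integrable_def)
  moreover have "(\<lambda>t. indicator {a..b} t *\<^sub>R f t) \<in> borel_measurable lborel"
    using assms(3) by measurable
  ultimately show ?thesis
    unfolding set_integrable_def using integrable_completion by blast
qed

lemma I_minus_cmult: "I_minus lam (\<lambda>\<tau>. a * f \<tau>) x = a * I_minus lam f x"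
  unfolding I_minus_def by (simp add: mult.left_commute[of _ a])

lemma I_minus_at_1: "I_minus lam f 1 = 0"
  by (simp add: I_minus_def)

lemma I_plus_eq_I_minus_reflect: "I_plus lam f x = I_minus lam (\<lambda>\<tau>. f (- \<tau>)) (- x)"
proof -
  have "{\<tau>. - \<tau> \<in> {-1..x}} = {-x..1}"
    by auto
  then show ?thesis
    unfolding I_plus_def I_minus_def by (subst set_integral_reflect) (simp add: algebra_simps)
qed

lemma I_minus_poly:
  fixes lam x :: real
  assumes "lam > 0" "x \<le> 1"
  shows "I_minus lam (\<lambda>\<tau>. \<Sum>k\<le>N. c k * (1 - \<tau>)^k) x
           = (\<Sum>k\<le>N. c k * (1 - x)^(k+1) * Beta (lam + real k + 1) (1/2))"
proof (cases "x = 1")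
  case True
  then show ?thesis
    by (simp add: I_minus_at_1)
next
  case False
  with assms(2) have x: "x < 1"
    by simp
  define f where "f k \<tau> = (\<tau> - x) powr (-1/2) * (1 - \<tau>) powr lam * (1 - \<tau>)^k" for k \<tau>
  define V where "V k = (1 - x) powr (lam + real k + 1/2) * Beta (lam + real k + 1) (1/2)" for k
  have f: "(f k has_integral V k) {x..1}" for k
    unfolding f_def V_def by (rule has_integral_I_minus_kernel_power[OF assms(1) x])
  have f_integrable: "set_integrable lborel {x..1} (f k)" for k
  proof (rule set_integrable_lborel_if_nonneg[OF has_integral_integrable[OF f]])
    show "f k \<in> borel_measurable borel"
      unfolding f_def by measurable
  qed (simp add: f_def)
  then have "(LINT \<tau>:{x..1}|lborel. (\<Sum>k\<le>N. c k * f k \<tau>)) = (\<Sum>k\<le>N. c k * (LINT \<tau>:{x..1}|lborel. f k \<tau>))"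
    unfolding set_lebesgue_integral_def set_integrable_def
    by (simp add: sum_distrib_left mult.left_commute[of _ "c _"] integral_sum)
  also have "\<dots> = (\<Sum>k\<le>N. c k * V k)"
    by (simp add: set_borel_integral_eq_integral(2)[OF f_integrable] integral_unique[OF f])
  finally have "I_minus lam (\<lambda>\<tau>. \<Sum>k\<le>N. c k * (1 - \<tau>)^k) x = (1 - x) powr (- lam + 1/2) * (\<Sum>k\<le>N. c k * V k)"
    unfolding I_minus_def f_def by (simp add: sum_distrib_left ac_simps)
  also have "\<dots> = (\<Sum>k\<le>N. c k * (1 - x)^(k+1) * Beta (lam + real k + 1) (1/2))"
  proof -
    have "(1 - x) powr (- lam + 1/2) * (1 - x) powr (lam + real k + 1/2) = (1 - x)^(k+1)" for k
    proof -
      have "(1 - x) powr (- lam + 1/2) * (1 - x) powr (lam + real k + 1/2) = (1 - x) powr real (k+1)"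
        by (simp add: powr_add[symmetric] algebra_simps)
      also have "\<dots> = (1 - x)^(k+1)"
        using x by (intro powr_realpow) simp
      finally show ?thesis .
    qed
    then show ?thesis
      unfolding V_def sum_distrib_left by (intro sum.cong refl) (simp add: ac_simps)
  qed
  finally show ?thesis .
qed

section \<open>The operators applied to Gegenbauer polynomials\<close>

lemma Beta_half_eq_pochhammer:
  fixes lam :: real
  assumes "lam > 0"
  shows "Beta (lam + real k + 1) (1/2)
           = sqrt pi * Gamma lam / Gamma (lam + 1/2) * pochhammer lam (k+1) / pochhammer (lam + 1/2) (k+1)"
proof -
  have "lam \<notin> \<int>\<^sub>\<le>\<^sub>0" "lam + 1/2 \<notin> \<int>\<^sub>\<le>\<^sub>0"
    using assms by (auto elim!: nonpos_Ints_cases)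
  moreover have "Gamma lam \<noteq> 0" "Gamma (lam + 1/2) \<noteq> 0"
    using assms by (simp_all add: Gamma_real_pos less_imp_neq[symmetric])
  ultimately show ?thesis
    by (simp add: Beta_def pochhammer_Gamma Gamma_one_half_real add_ac)
qed

lemma gegenbauer_coeff_contiguous_0:
  "(real n + 2*lam) * gegenbauer_coeff lam n 0 - (real n + 1) * gegenbauer_coeff lam (n+1) 0 = 0"
proof -
  have "pochhammer (2*lam) (n+1) = pochhammer (2*lam) n * (2*lam + real n)"
    "fact (n+1) = (real n + 1) * fact n"
    by (simp_all add: pochhammer_rec' algebra_simps)
  then show ?thesis
    by (simp add: gegenbauer_coeff_0 divide_simps) (simp add: algebra_simps)
qed

lemma gegenbauer_coeff_contiguous_Suc:
  fixes lam :: real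
  assumes "lam > -1/2"
  shows "(2 * real n + 2*lam + 1) * gegenbauer_coeff (lam + 1/2) n j
           * pochhammer lam (j+1) / pochhammer (lam + 1/2) (j+1)
         = (real n + 2*lam) * gegenbauer_coeff lam n (Suc j) - (real n + 1) * gegenbauer_coeff lam (n+1) (Suc j)"
proof -
  define V where "V = pochhammer (- real n) j"
  define Q where "Q = pochhammer (2*lam + 1) (n + j)"
  define H where "H = pochhammer (lam + 1/2) j"
  define L where "L = pochhammer (lam + 1) j"
  have nz: "H \<noteq> 0" "L \<noteq> 0" "lam + 1/2 + real j \<noteq> 0"
    using assms by (auto simp: H_def L_def pochhammer_eq_0_iff)
  have V: "pochhammer (- real n) (Suc j) = V * (real j - real n)"
    by (simp add: V_def pochhammer_rec' algebra_simps)
  have V': "pochhammer (- real (n+1)) (Suc j) = (- real n - 1) * V"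
    by (simp add: V_def pochhammer_rec algebra_simps)
  have Q: "pochhammer (2*(lam + 1/2)) (n + j) = Q"
    "pochhammer (2*lam) (n + Suc j) = 2*lam * Q"
    by (simp_all add: Q_def pochhammer_rec algebra_simps)
  have "pochhammer (2*lam) (n + 1 + Suc j) = 2*lam * pochhammer (2*lam + 1) (Suc (n + j))"
    by (simp add: pochhammer_rec)
  also have "\<dots> = 2*lam * Q * (2*lam + 1 + real n + real j)"
    by (simp add: Q_def pochhammer_rec' algebra_simps)
  finally have Q': "pochhammer (2*lam) (n + 1 + Suc j) = 2*lam * Q * (2*lam + 1 + real n + real j)" .
  have L: "pochhammer (lam + 1/2 + 1/2) j = L" "pochhammer lam (j+1) = lam * L"
    by (simp_all add: L_def pochhammer_rec add_ac)
  have H: "pochhammer (lam + 1/2) (Suc j) = H * (lam + 1/2 + real j)"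
    "pochhammer (lam + 1/2) (j+1) = H * (lam + 1/2 + real j)"
    by (simp_all add: H_def pochhammer_rec')
  have F: "fact (n+1) = (real n + 1) * fact n" "fact (Suc j) = (real j + 1) * fact j"
    by (simp_all add: algebra_simps)
  show ?thesis
    using nz unfolding gegenbauer_coeff_def V V' Q Q' L H F H_def[symmetric] V_def[symmetric]
    by (simp add: divide_simps) (simp add: algebra_simps)
qed

lemma I_minus_gegenbauer:
  fixes lam x :: real
  assumes "lam > 0" "x \<le> 1"
  shows "I_minus lam (gegenbauer (lam + 1/2) n) x
           = sqrt pi * Gamma lam / Gamma (lam + 1/2) / (2 * real n + 2*lam + 1)
               * ((real n + 2*lam) * gegenbauer lam n x - (real n + 1) * gegenbauer lam (n+1) x)"
proof -
  define c where "c = sqrt pi * Gamma lam / Gamma (lam + 1/2) / (2 * real n + 2*lam + 1)"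
  define b where "b k = (real n + 2*lam) * gegenbauer_coeff lam n k - (real n + 1) * gegenbauer_coeff lam (n+1) k"
    for k
  define y where "y = 1 - x"
  have "2 * real n + 2*lam + 1 \<noteq> 0"
    using assms(1) by simp
  have coeff: "gegenbauer_coeff (lam + 1/2) n k * Beta (lam + real k + 1) (1/2) = c * b (Suc k)" for k
  proof -
    have "b (Suc k) = (2 * real n + 2*lam + 1) * gegenbauer_coeff (lam + 1/2) n k
        * pochhammer lam (k+1) / pochhammer (lam + 1/2) (k+1)"
      unfolding b_def by (rule gegenbauer_coeff_contiguous_Suc[symmetric]) (use assms(1) in simp)
    with \<open>2 * real n + 2*lam + 1 \<noteq> 0\<close> show ?thesis
      unfolding c_def Beta_half_eq_pochhammer[OF assms(1)] by simp
  qed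
  have "gegenbauer (lam + 1/2) n = (\<lambda>\<tau>. \<Sum>k\<le>n. gegenbauer_coeff (lam + 1/2) n k * (1 - \<tau>)^k)"
    using assms(1) by (intro ext gegenbauer_eq_sum_coeff) simp_all
  then have "I_minus lam (gegenbauer (lam + 1/2) n) x
      = (\<Sum>k\<le>n. gegenbauer_coeff (lam + 1/2) n k * y^(k+1) * Beta (lam + real k + 1) (1/2))"
    using I_minus_poly[OF assms] by (simp add: y_def)
  also have "\<dots> = c * (\<Sum>k\<le>n. b (Suc k) * y^Suc k)"
    unfolding sum_distrib_left by (intro sum.cong refl) (simp add: coeff[symmetric] ac_simps)
  also have "(\<Sum>k\<le>n. b (Suc k) * y^Suc k) = (\<Sum>k\<le>n+1. b k * y^k)"
    using gegenbauer_coeff_contiguous_0[of n lam] by (simp add: sum.atMost_Suc_shift b_def del: sum.atMost_Suc)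
  also have "\<dots> = (real n + 2*lam) * gegenbauer lam n x - (real n + 1) * gegenbauer lam (n+1) x"
  proof -
    have G: "gegenbauer lam n x = (\<Sum>k\<le>n+1. gegenbauer_coeff lam n k * y^k)"
      "gegenbauer lam (n+1) x = (\<Sum>k\<le>n+1. gegenbauer_coeff lam (n+1) k * y^k)"
      using assms(1) unfolding y_def by (intro gegenbauer_eq_sum_coeff; simp)+
    show ?thesis
      unfolding G sum_distrib_left sum_subtractf[symmetric] b_def
      by (intro sum.cong refl) (simp add: algebra_simps)
  qed
  finally show ?thesis
    by (simp add: c_def)
qed

lemma I_plus_gegenbauer:
  fixes lam x :: real
  assumes "lam > 0" "-1 \<le> x"
  shows "I_plus lam (gegenbauer (lam + 1/2) n) x
           = sqrt pi * Gamma lam / Gamma (lam + 1/2) / (2 * real n + 2*lam + 1)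
               * ((real n + 2*lam) * gegenbauer lam n x + (real n + 1) * gegenbauer lam (n+1) x)"
proof -
  define c where "c = sqrt pi * Gamma lam / Gamma (lam + 1/2) / (2 * real n + 2*lam + 1)"
  have "I_plus lam (gegenbauer (lam + 1/2) n) x = (-1)^n * I_minus lam (gegenbauer (lam + 1/2) n) (-x)"
    by (simp add: I_plus_eq_I_minus_reflect gegenbauer_minus I_minus_cmult)
  also have "\<dots> = (-1)^n * (c * ((real n + 2*lam) * gegenbauer lam n (-x)
      - (real n + 1) * gegenbauer lam (n+1) (-x)))"
    unfolding c_def using assms by (simp add: I_minus_gegenbauer)
  also have "\<dots> = c * ((real n + 2*lam) * gegenbauer lam n x + (real n + 1) * gegenbauer lam (n+1) x)"
    by (cases "even n") (simp_all add: gegenbauer_minus algebra_simps)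
  finally show ?thesis
    by (simp add: c_def)
qed

theorem theorem3p3:
  fixes lam x :: real and n :: nat
  assumes "lam > 0" and "x \<in> {-1..1}"
  shows "(calI_plus lam (gegenbauer (lam + 1/2) n) x =
           sqrt pi * Gamma lam / Gamma (lam + 1/2) * ((real n + 2 * lam) / (real n + lam + 1/2))
             * gegenbauer lam n x) \<and>
         (calI_minus lam (gegenbauer (lam + 1/2) n) x =
           sqrt pi * Gamma lam / Gamma (lam + 1/2) * ((real n + 1) / (real n + lam + 1/2))
             * gegenbauer lam (n + 1) x)"
proof -
  define c where "c = sqrt pi * Gamma lam / Gamma (lam + 1/2) / (2 * real n + 2*lam + 1)"
  have x: "-1 \<le> x" "x \<le> 1"
    using assms(2) by auto
  have "calI_plus lam (gegenbauer (lam + 1/2) n) x = 2 * c * (real n + 2*lam) * gegenbauer lam n x"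
    "calI_minus lam (gegenbauer (lam + 1/2) n) x = 2 * c * (real n + 1) * gegenbauer lam (n+1) x"
    unfolding calI_plus_def calI_minus_def I_plus_gegenbauer[OF assms(1) x(1)]
      I_minus_gegenbauer[OF assms(1) x(2)] c_def[symmetric]
    by (simp_all add: algebra_simps)
  moreover have "2 * c = sqrt pi * Gamma lam / Gamma (lam + 1/2) / (real n + lam + 1/2)"
    by (simp add: c_def field_simps)
  ultimately show ?thesis
    by simp
qed

end
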